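(* For a restless bandit and a family $\mathcal F\subseteq 2^{N^{\{0,1\}}}$ as in the context, the following are equivalent: (1) $w^S_j>0$ for all $S\in\mathcal F$ and $j\in N^{\{0,1\}}$; (2) for all $S\in\mathcal F$, $b^S_j<b^{S\cup\{j\}}_j$ for every $j\in N^{\{0,1\}}\setminus S$, and $b^S_j>b^{S\setminus\{j\}}_j$ for every $j\in S$.
   Context: Restless bandit: finite state space $N=N^{\{0,1\}}\cup N^{\{1\}}$ (disjoint); actions $a\in\{0,1\}$; transition probabilities $p^a_{ij}$ with $p^1_{ij}=p^0_{ij}$ for $i\in N^{\{1\}}$; discount factor $\beta\in(0,1)$; activity weights $\theta^1_j>0$. For $S\subseteq N^{\{0,1\}}$ the $S$-active policy is active on $S\cup N^{\{1\}}$ and passive on $N^{\{0,1\}}\setminus S$; $b^S_i=E_i[\sum_{t\ge0}\theta^1_{X(t)}a(t)\beta^t]$ under it, from $X(0)=i$. Marginal workloads: $w^S_i=\theta^1_i1\{i\in N^{\{0,1\}}\}+\beta\sum_{j\in N}(p^1_{ij}-p^0_{ij})b^S_j$. $\mathcal F$ is a family of subsets of $N^{\{0,1\}}$. *)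

theory Defs
  imports Complex_Main
begin

text \<open>Actions are encoded as bool: True = active (a = 1), False = passive (a = 0).
  p a i j is the one-step transition probability from i to j under action a.\<close>

definition act :: "'a set \<Rightarrow> 'a set \<Rightarrow> 'a \<Rightarrow> bool" where
  "act N1 S i \<longleftrightarrow> i \<in> S \<union> N1"

fun ptrans :: "'a set \<Rightarrow> 'a set \<Rightarrow> (bool \<Rightarrow> 'a \<Rightarrow> 'a \<Rightarrow> real) \<Rightarrow> 'a set
                 \<Rightarrow> nat \<Rightarrow> 'a \<Rightarrow> 'a \<Rightarrow> real" where
  "ptrans N N1 p S 0 i j = (if i = j then 1 else 0)"
| "ptrans N N1 p S (Suc t) i j = (\<Sum>k\<in>N. ptrans N N1 p S t i k * p (act N1 S k) k j)"

text \<open>b^S_i = E_i[ sum_t theta_{X(t)} a(t) beta^t ] under the S-active policy,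
  written out via the t-step transition probabilities (linearity of expectation).\<close>
definition bwork :: "'a set \<Rightarrow> 'a set \<Rightarrow> (bool \<Rightarrow> 'a \<Rightarrow> 'a \<Rightarrow> real) \<Rightarrow> real
                 \<Rightarrow> ('a \<Rightarrow> real) \<Rightarrow> 'a set \<Rightarrow> 'a \<Rightarrow> real" where
  "bwork N N1 p \<beta> \<theta> S i =
     (\<Sum>t. \<beta> ^ t * (\<Sum>j\<in>N. ptrans N N1 p S t i j * \<theta> j * (if act N1 S j then 1 else 0)))"

definition mwork :: "'a set \<Rightarrow> 'a set \<Rightarrow> 'a set \<Rightarrow> (bool \<Rightarrow> 'a \<Rightarrow> 'a \<Rightarrow> real) \<Rightarrow> real
                 \<Rightarrow> ('a \<Rightarrow> real) \<Rightarrow> 'a set \<Rightarrow> 'a \<Rightarrow> real" where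
  "mwork N N01 N1 p \<beta> \<theta> S i =
     \<theta> i * (if i \<in> N01 then 1 else 0)
     + \<beta> * (\<Sum>j\<in>N. (p True i j - p False i j) * bwork N N1 p \<beta> \<theta> S j)"

end

theory Submission
  imports Defs
begin

(* If the policies U and V act differently only at state j, the Bellman equations give for
   d = b^U - b^V the equation d = c e_j + beta P^U d, where c is the one-step gain at j of U's
   action over V's, both followed by V. A minimum principle for this discounted equation (the
   minimum m of d satisfies m >= beta m) shows that d_j has the sign of c. For the switches
   S -> S \<union> {j} and S - {j} -> S this gain is, up to sign, the marginal workload w^S_j. *)

lemma discounted_supersolution_nonneg:
  fixes d :: "'a \<Rightarrow> real"
  assumes "finite N"
    and Q_nonneg: "\<And>i k. i \<in> N \<Longrightarrow> k \<in> N \<Longrightarrow> 0 \<le> Q i k"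
    and Q_row_sum: "\<And>i. i \<in> N \<Longrightarrow> (\<Sum>k\<in>N. Q i k) = 1"
    and \<beta>: "0 \<le> \<beta>" "\<beta> < 1"
    and super: "\<And>i. i \<in> N \<Longrightarrow> \<beta> * (\<Sum>k\<in>N. Q i k * d k) \<le> d i"
    and "i \<in> N"
  shows "0 \<le> d i"
proof -
  obtain m where "is_arg_min d (\<lambda>k. k \<in> N) m"
    using ex_is_arg_min_if_finite[of N d] \<open>finite N\<close> \<open>i \<in> N\<close> by blast
  then have m: "m \<in> N" "\<And>k. k \<in> N \<Longrightarrow> d m \<le> d k"
    by (simp_all add: is_arg_min_linorder)
  have "d m = (\<Sum>k\<in>N. Q m k * d m)"
    using Q_row_sum[OF m(1)] by (simp add: sum_distrib_right[symmetric])
  also have "\<dots> \<le> (\<Sum>k\<in>N. Q m k * d k)"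
    by (intro sum_mono mult_left_mono m Q_nonneg)
  finally have "\<beta> * d m \<le> d m"
    using super[OF m(1)] \<beta>(1) by (meson mult_left_mono order_trans)
  then have "0 \<le> (1 - \<beta>) * d m"
    by (simp add: left_diff_distrib)
  then have "0 \<le> d m"
    using \<beta>(2) by (simp add: zero_le_mult_iff)
  then show ?thesis
    using m(2)[OF \<open>i \<in> N\<close>] by linarith
qed

lemma point_source_sgn:
  fixes d :: "'a \<Rightarrow> real"
  assumes "finite N"
    and Q_nonneg: "\<And>i k. i \<in> N \<Longrightarrow> k \<in> N \<Longrightarrow> 0 \<le> Q i k"
    and Q_row_sum: "\<And>i. i \<in> N \<Longrightarrow> (\<Sum>k\<in>N. Q i k) = 1"
    and \<beta>: "0 \<le> \<beta>" "\<beta> < 1"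
    and "j \<in> N"
    and d: "\<And>i. i \<in> N \<Longrightarrow> d i = (if i = j then c else 0) + \<beta> * (\<Sum>k\<in>N. Q i k * d k)"
  shows "sgn (d j) = sgn c"
proof -
  have source_le: "c' \<le> d' j"
    if "0 \<le> c'" and d': "\<And>i. i \<in> N \<Longrightarrow> d' i = (if i = j then c' else 0) + \<beta> * (\<Sum>k\<in>N. Q i k * d' k)"
    for c' and d' :: "'a \<Rightarrow> real"
  proof -
    have "0 \<le> d' k" if "k \<in> N" for k
      using assms(1) Q_nonneg Q_row_sum \<beta> _ that
    proof (rule discounted_supersolution_nonneg)
      show "\<beta> * (\<Sum>k\<in>N. Q i k * d' k) \<le> d' i" if "i \<in> N" for i
        using d'[OF that] \<open>0 \<le> c'\<close> by simp
    qed
    then have "0 \<le> \<beta> * (\<Sum>k\<in>N. Q j k * d' k)"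
      using \<beta>(1) \<open>j \<in> N\<close> by (simp add: Q_nonneg sum_nonneg)
    then show ?thesis
      using d'[OF \<open>j \<in> N\<close>] by simp
  qed
  have "c \<le> d j" if "0 \<le> c"
    using source_le[OF that d] .
  moreover have "d j \<le> c" if "c \<le> 0"
  proof -
    have neg_d: "- d i = (if i = j then - c else 0) + \<beta> * (\<Sum>k\<in>N. Q i k * - d k)" if "i \<in> N" for i
      using d[OF that] by (simp add: sum_negf)
    have "- c \<le> - d j"
      by (rule source_le[of "- c" "\<lambda>i. - d i"]) (use that in simp, use neg_d in blast)
    then show ?thesis
      by simp
  qed
  ultimately show ?thesis
    by (cases c "0::real" rule: linorder_cases) (auto simp: sgn_if)
qed

definition qwork :: "'a set \<Rightarrow> 'a set \<Rightarrow> (bool \<Rightarrow> 'a \<Rightarrow> 'a \<Rightarrow> real) \<Rightarrow> real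
                 \<Rightarrow> ('a \<Rightarrow> real) \<Rightarrow> 'a set \<Rightarrow> bool \<Rightarrow> 'a \<Rightarrow> real" where
  "qwork N N1 p \<beta> \<theta> S a i =
     \<theta> i * (if a then 1 else 0) + \<beta> * (\<Sum>k\<in>N. p a i k * bwork N N1 p \<beta> \<theta> S k)"

lemma mwork_eq_qwork_gain:
  "i \<in> N01 \<Longrightarrow> mwork N N01 N1 p \<beta> \<theta> S i = qwork N N1 p \<beta> \<theta> S True i - qwork N N1 p \<beta> \<theta> S False i"
  by (simp add: mwork_def qwork_def left_diff_distrib sum_subtractf right_diff_distrib)

locale controlled_markov_chain =
  fixes N :: "'a set" and p :: "bool \<Rightarrow> 'a \<Rightarrow> 'a \<Rightarrow> real"
  assumes finite_N: "finite N"
    and p_nonneg: "\<And>a i j. i \<in> N \<Longrightarrow> j \<in> N \<Longrightarrow> 0 \<le> p a i j"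
    and p_row_sum: "\<And>a i. i \<in> N \<Longrightarrow> (\<Sum>j\<in>N. p a i j) = 1"
begin

lemma ptrans_nonneg: "j \<in> N \<Longrightarrow> 0 \<le> ptrans N N1 p S t i j"
  by (induction t arbitrary: j) (simp_all add: p_nonneg sum_nonneg)

lemma ptrans_row_sum: "i \<in> N \<Longrightarrow> (\<Sum>j\<in>N. ptrans N N1 p S t i j) = 1"
proof (induction t)
  case 0
  then show ?case using finite_N by simp
next
  case (Suc t)
  have "(\<Sum>j\<in>N. ptrans N N1 p S (Suc t) i j)
      = (\<Sum>k\<in>N. ptrans N N1 p S t i k * (\<Sum>j\<in>N. p (act N1 S k) k j))"
    by (simp add: sum_distrib_left) (rule sum.swap)
  also have "\<dots> = (\<Sum>k\<in>N. ptrans N N1 p S t i k)"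
    by (simp add: p_row_sum)
  finally show ?case using Suc by simp
qed

lemma ptrans_le_one: "i \<in> N \<Longrightarrow> j \<in> N \<Longrightarrow> ptrans N N1 p S t i j \<le> 1"
  using member_le_sum[of j N "ptrans N N1 p S t i"] finite_N
  by (simp add: ptrans_nonneg ptrans_row_sum)

lemma ptrans_Suc_left:
  assumes "i \<in> N" "j \<in> N"
  shows "ptrans N N1 p S (Suc t) i j = (\<Sum>k\<in>N. p (act N1 S i) i k * ptrans N N1 p S t k j)"
  using \<open>j \<in> N\<close>
proof (induction t arbitrary: j)
  case 0
  then show ?case using assms(1) finite_N by (simp add: of_bool_def[symmetric])
next
  case (Suc t)
  have "ptrans N N1 p S (Suc (Suc t)) i j
      = (\<Sum>l\<in>N. (\<Sum>k\<in>N. p (act N1 S i) i k * ptrans N N1 p S t k l) * p (act N1 S l) l j)"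
    using Suc.IH by simp
  also have "\<dots> = (\<Sum>k\<in>N. p (act N1 S i) i k * ptrans N N1 p S (Suc t) k j)"
    by (simp add: sum_distrib_left sum_distrib_right mult.assoc) (rule sum.swap)
  finally show ?case .
qed

lemma summable_discounted_reward:
  assumes "\<bar>\<beta>\<bar> < 1" "i \<in> N"
  shows "summable (\<lambda>t. \<beta> ^ t * (\<Sum>j\<in>N. ptrans N N1 p S t i j * r j))"
proof (rule summable_comparison_test')
  show "summable (\<lambda>t. (\<Sum>j\<in>N. \<bar>r j\<bar>) * \<bar>\<beta>\<bar> ^ t)"
    using assms(1) by (simp add: summable_geometric)
  fix t
  have "\<bar>\<Sum>j\<in>N. ptrans N N1 p S t i j * r j\<bar> \<le> (\<Sum>j\<in>N. \<bar>r j\<bar>)"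
  proof (rule order_trans[OF sum_abs sum_mono])
    fix j assume "j \<in> N"
    then show "\<bar>ptrans N N1 p S t i j * r j\<bar> \<le> \<bar>r j\<bar>"
      using assms(2) by (simp add: abs_mult ptrans_nonneg ptrans_le_one mult_left_le_one_le)
  qed
  then show "norm (\<beta> ^ t * (\<Sum>j\<in>N. ptrans N N1 p S t i j * r j)) \<le> (\<Sum>j\<in>N. \<bar>r j\<bar>) * \<bar>\<beta>\<bar> ^ t"
    by (simp add: abs_mult power_abs mult.commute mult_left_mono)
qed

lemma discounted_reward_step:
  assumes "\<bar>\<beta>\<bar> < 1" "i \<in> N"
  shows "(\<Sum>t. \<beta> ^ t * (\<Sum>j\<in>N. ptrans N N1 p S t i j * r j))
    = r i + \<beta> * (\<Sum>k\<in>N. p (act N1 S i) i k * (\<Sum>t. \<beta> ^ t * (\<Sum>j\<in>N. ptrans N N1 p S t k j * r j)))"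
proof -
  define v where "v t k = \<beta> ^ t * (\<Sum>j\<in>N. ptrans N N1 p S t k j * r j)" for t k
  define q where "q k = p (act N1 S i) i k" for k
  have summable: "summable (\<lambda>t. v t k)" if "k \<in> N" for k
    unfolding v_def using assms(1) that by (rule summable_discounted_reward)
  have v_Suc: "v (Suc t) i = \<beta> * (\<Sum>k\<in>N. q k * v t k)" for t
  proof -
    have "(\<Sum>j\<in>N. ptrans N N1 p S (Suc t) i j * r j)
        = (\<Sum>j\<in>N. \<Sum>k\<in>N. q k * (ptrans N N1 p S t k j * r j))"
      unfolding q_def
      by (intro sum.cong refl) (simp only: ptrans_Suc_left[OF assms(2)] sum_distrib_right mult.assoc)
    also have "\<dots> = (\<Sum>k\<in>N. q k * (\<Sum>j\<in>N. ptrans N N1 p S t k j * r j))"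
      unfolding sum_distrib_left by (rule sum.swap)
    finally show ?thesis
      by (simp add: v_def sum_distrib_left mult_ac)
  qed
  have "(\<Sum>t. v t i) = (\<Sum>t. v (Suc t) i) + v 0 i"
    using suminf_split_head[OF summable[OF assms(2)]] by simp
  also have "(\<Sum>t. v (Suc t) i) = \<beta> * (\<Sum>t. \<Sum>k\<in>N. q k * v t k)"
    unfolding v_Suc by (intro suminf_mult summable_sum summable_mult summable)
  also have "(\<Sum>t. \<Sum>k\<in>N. q k * v t k) = (\<Sum>k\<in>N. q k * (\<Sum>t. v t k))"
    by (simp add: suminf_sum summable_mult summable suminf_mult)
  also have "v 0 i = r i"
    using assms(2) finite_N by (simp add: v_def of_bool_def[symmetric])
  finally show ?thesis by (simp add: v_def q_def)
qed

lemma bwork_bellman: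
  assumes "\<bar>\<beta>\<bar> < 1" "i \<in> N"
  shows "bwork N N1 p \<beta> \<theta> S i = qwork N N1 p \<beta> \<theta> S (act N1 S i) i"
  using discounted_reward_step[OF assms, of N1 S "\<lambda>j. \<theta> j * (if act N1 S j then 1 else 0)"]
  by (simp add: bwork_def qwork_def mult.assoc)

lemma bwork_diff_eq:
  assumes "\<bar>\<beta>\<bar> < 1" "i \<in> N"
  shows "bwork N N1 p \<beta> \<theta> U i - bwork N N1 p \<beta> \<theta> V i
    = (qwork N N1 p \<beta> \<theta> V (act N1 U i) i - qwork N N1 p \<beta> \<theta> V (act N1 V i) i)
      + \<beta> * (\<Sum>k\<in>N. p (act N1 U i) i k * (bwork N N1 p \<beta> \<theta> U k - bwork N N1 p \<beta> \<theta> V k))"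
proof -
  have "qwork N N1 p \<beta> \<theta> U a i - qwork N N1 p \<beta> \<theta> V a i
      = \<beta> * (\<Sum>k\<in>N. p a i k * (bwork N N1 p \<beta> \<theta> U k - bwork N N1 p \<beta> \<theta> V k))" for a
    by (simp add: qwork_def right_diff_distrib sum_subtractf)
  from this[of "act N1 U i"] show ?thesis
    using bwork_bellman[OF assms, of N1 \<theta> U] bwork_bellman[OF assms, of N1 \<theta> V] by linarith
qed

lemma bwork_switch_sgn:
  assumes "0 \<le> \<beta>" "\<beta> < 1" "j \<in> N"
    and agree: "\<And>i. i \<noteq> j \<Longrightarrow> act N1 U i = act N1 V i"
  shows "sgn (bwork N N1 p \<beta> \<theta> U j - bwork N N1 p \<beta> \<theta> V j)
    = sgn (qwork N N1 p \<beta> \<theta> V (act N1 U j) j - qwork N N1 p \<beta> \<theta> V (act N1 V j) j)"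
proof (rule point_source_sgn[OF finite_N _ _ assms(1-3)])
  show "bwork N N1 p \<beta> \<theta> U i - bwork N N1 p \<beta> \<theta> V i
      = (if i = j then qwork N N1 p \<beta> \<theta> V (act N1 U j) j - qwork N N1 p \<beta> \<theta> V (act N1 V j) j else 0)
        + \<beta> * (\<Sum>k\<in>N. p (act N1 U i) i k * (bwork N N1 p \<beta> \<theta> U k - bwork N N1 p \<beta> \<theta> V k))"
    if "i \<in> N" for i
    using bwork_diff_eq[OF _ that, of \<beta> N1 \<theta> U V] assms(1,2) agree by auto
qed (simp_all add: p_nonneg p_row_sum)

context
  fixes N01 N1 :: "'a set"
  assumes partition: "N = N01 \<union> N1" "N01 \<inter> N1 = {}"
begin

lemma bwork_activate_iff:
  assumes "0 \<le> \<beta>" "\<beta> < 1" "j \<in> N01" "j \<notin> S"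
  shows "bwork N N1 p \<beta> \<theta> S j < bwork N N1 p \<beta> \<theta> (S \<union> {j}) j \<longleftrightarrow> 0 < mwork N N01 N1 p \<beta> \<theta> S j"
proof -
  have "act N1 (S \<union> {j}) j" "\<not> act N1 S j"
    using assms(3,4) partition by (auto simp: act_def)
  then have "sgn (bwork N N1 p \<beta> \<theta> (S \<union> {j}) j - bwork N N1 p \<beta> \<theta> S j) = sgn (mwork N N01 N1 p \<beta> \<theta> S j)"
    using bwork_switch_sgn[OF assms(1,2), of j N1 "S \<union> {j}" S \<theta>] assms(3) partition
    by (simp add: mwork_eq_qwork_gain act_def)
  then show ?thesis
    by (metis diff_gt_0_iff_gt sgn_greater)
qed

lemma bwork_deactivate_iff:
  assumes "0 \<le> \<beta>" "\<beta> < 1" "j \<in> N01" "j \<in> S"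
  shows "bwork N N1 p \<beta> \<theta> (S - {j}) j < bwork N N1 p \<beta> \<theta> S j \<longleftrightarrow> 0 < mwork N N01 N1 p \<beta> \<theta> S j"
proof -
  have "\<not> act N1 (S - {j}) j" "act N1 S j"
    using assms(3,4) partition by (auto simp: act_def)
  then have "sgn (bwork N N1 p \<beta> \<theta> (S - {j}) j - bwork N N1 p \<beta> \<theta> S j) = - sgn (mwork N N01 N1 p \<beta> \<theta> S j)"
    using bwork_switch_sgn[OF assms(1,2), of j N1 "S - {j}" S \<theta>] assms(3) partition
    by (simp add: mwork_eq_qwork_gain act_def sgn_minus[symmetric])
  then show ?thesis
    by (metis diff_less_0_iff_less neg_less_0_iff_less sgn_greater sgn_less)
qed

lemma mwork_pos_iff_bwork_switch_mono:
  assumes "0 \<le> \<beta>" "\<beta> < 1" "S \<subseteq> N01"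
  shows "(\<forall>j\<in>N01. 0 < mwork N N01 N1 p \<beta> \<theta> S j)
    \<longleftrightarrow> (\<forall>j\<in>N01 - S. bwork N N1 p \<beta> \<theta> S j < bwork N N1 p \<beta> \<theta> (S \<union> {j}) j)
      \<and> (\<forall>j\<in>S. bwork N N1 p \<beta> \<theta> (S - {j}) j < bwork N N1 p \<beta> \<theta> S j)"
    (is "?pos \<longleftrightarrow> ?activate \<and> ?deactivate")
proof (intro iffI conjI)
  assume ?pos
  then show ?activate ?deactivate
    using bwork_activate_iff[OF assms(1,2)] bwork_deactivate_iff[OF assms(1,2)] assms(3) by auto
next
  assume mono: "?activate \<and> ?deactivate"
  show ?pos
  proof
    fix j assume "j \<in> N01"
    show "0 < mwork N N01 N1 p \<beta> \<theta> S j"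
    proof (cases "j \<in> S")
      case True
      with mono \<open>j \<in> N01\<close> show ?thesis
        using bwork_deactivate_iff[OF assms(1,2)] by blast
    next
      case False
      with mono \<open>j \<in> N01\<close> show ?thesis
        using bwork_activate_iff[OF assms(1,2)] by blast
    qed
  qed
qed

end

end

theorem proposition5:
  fixes N N01 N1 :: "'a set"
    and p :: "bool \<Rightarrow> 'a \<Rightarrow> 'a \<Rightarrow> real"
    and \<beta> :: real
    and \<theta> :: "'a \<Rightarrow> real"
    and F :: "'a set set"
  assumes finN: "finite N"
    and partN: "N = N01 \<union> N1" and disj: "N01 \<inter> N1 = {}"
    and p_nonneg: "\<And>a i j. i \<in> N \<Longrightarrow> j \<in> N \<Longrightarrow> p a i j \<ge> 0"
    and p_stoch: "\<And>a i. i \<in> N \<Longrightarrow> (\<Sum>j\<in>N. p a i j) = 1"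
    and p_N1: "\<And>i j. i \<in> N1 \<Longrightarrow> j \<in> N \<Longrightarrow> p True i j = p False i j"
    and beta: "0 < \<beta>" "\<beta> < 1"
    and theta_pos: "\<And>j. j \<in> N \<Longrightarrow> \<theta> j > 0"
    and F_sub: "\<And>S. S \<in> F \<Longrightarrow> S \<subseteq> N01"
  shows "(\<forall>S\<in>F. \<forall>j\<in>N01. mwork N N01 N1 p \<beta> \<theta> S j > 0)
     \<longleftrightarrow> (\<forall>S\<in>F. (\<forall>j\<in>N01 - S. bwork N N1 p \<beta> \<theta> S j < bwork N N1 p \<beta> \<theta> (S \<union> {j}) j)
                 \<and> (\<forall>j\<in>S. bwork N N1 p \<beta> \<theta> S j > bwork N N1 p \<beta> \<theta> (S - {j}) j))"
proof -
  interpret controlled_markov_chain N p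
    using finN p_nonneg p_stoch by unfold_locales
  show ?thesis
    using mwork_pos_iff_bwork_switch_mono[OF partN disj less_imp_le[OF beta(1)] beta(2) F_sub]
    by (simp cong: ball_cong)
qed

end
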